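(* Let $m\ge 2$ and let $e_1=(1,0)$, $e_2=(0,1)$ be the standard generating set of $\mathbb{Z}\times\mathbb{Z}_m$. Then the Cayley digraph $\mathrm{Cay}(\mathbb{Z}\times\mathbb{Z}_m;e_1,e_2)$ has a two-way infinite hamiltonian path, and it is unique up to translations.
   Context: The Cayley digraph $\mathrm{Cay}(G;a,b)$ has vertex set $G$ and an arc from $v$ to $v+s$ for all $v\in G$, $s\in\{a,b\}$. A two-way infinite hamiltonian path is a doubly-infinite sequence $\ldots,v_{-1},v_0,v_1,\ldots$ listing every vertex exactly once with an arc from $v_i$ to $v_{i+1}$ for all $i\in\mathbb{Z}$. A translate of a path by $g\in G$ is obtained by adding $g$ to every vertex. *)

theory Defs
  imports Main
begin

text \<open>The group Z x Z_m, represented by pairs (a, b) of integers with 0 <= b < m.\<close>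

definition zzm_verts :: "int \<Rightarrow> (int \<times> int) set" where
  "zzm_verts m = {(a, b). 0 \<le> b \<and> b < m}"

definition zzm_add :: "int \<Rightarrow> int \<times> int \<Rightarrow> int \<times> int \<Rightarrow> int \<times> int" where
  "zzm_add m v w = (fst v + fst w, (snd v + snd w) mod m)"

definition cay_arc :: "int \<Rightarrow> int \<times> int \<Rightarrow> int \<times> int \<Rightarrow> bool" where
  "cay_arc m v w \<longleftrightarrow> w = zzm_add m v (1, 0) \<or> w = zzm_add m v (0, 1)"

definition two_way_ham_path :: "int \<Rightarrow> (int \<Rightarrow> int \<times> int) \<Rightarrow> bool" where
  "two_way_ham_path m p \<longleftrightarrow>
     bij_betw p UNIV (zzm_verts m) \<and> (\<forall>i. cay_arc m (p i) (p (i + 1)))"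

end

theory Submission
  imports Defs "HOL-Number_Theory.Cong"
begin

(*
  Every arc adds 1 to a + b modulo m, so a hamiltonian path runs through the diagonals
  a + b = c (mod m) cyclically. If the path leaves (a, b) along e1, it cannot leave
  (a + 1, b - 1) along e2, since both steps would enter (a + 1, b); conversely, if it leaves
  (a + 1, b - 1) along e1, then (a + 1, b) can only be entered from (a, b). Hence whether a
  vertex is left along e1 depends only on its diagonal, and the step pattern of the path is
  m-periodic. Now (a + 1, b - 1) lies on the diagonal of (a, b), so the path reaches it from
  (a, b) in j m steps for some j, while the first coordinate grows by j times the number of
  e1-steps per period: that number is 1. A path is therefore determined by its start and by
  the residue mod m of the indices of its e1-steps, so any two differ by an index shift and a
  translation. Existence: repeat m - 1 steps along e2 followed by one step along e1.
*)

lemma int_induct_iff: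
  fixes P :: "int \<Rightarrow> bool"
  assumes "P 0" and "\<And>i. P i \<longleftrightarrow> P (i + 1)"
  shows "P i"
proof (induction i rule: int_induct[where k = 0])
  case base
  show ?case by (fact assms(1))
next
  case (step1 i)
  then show ?case using assms(2) by blast
next
  case (step2 i)
  then show ?case using assms(2)[of "i - 1"] by simp
qed

lemma zzm_add_in_verts: "0 < m \<Longrightarrow> zzm_add m v w \<in> zzm_verts m"
  by (simp add: zzm_add_def zzm_verts_def)

lemma zzm_add_e1: "v \<in> zzm_verts m \<Longrightarrow> zzm_add m v (1, 0) = (fst v + 1, snd v)"
  by (auto simp: zzm_add_def zzm_verts_def)

lemma zzm_add_e2: "zzm_add m v (0, 1) = (fst v, (snd v + 1) mod m)"
  by (simp add: zzm_add_def)

lemma zzm_add_right_commute: "zzm_add m (zzm_add m v w) u = zzm_add m (zzm_add m v u) w"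
  by (simp add: zzm_add_def mod_simps algebra_simps)

lemma zzm_add_right_cancel:
  assumes "v \<in> zzm_verts m" and "w \<in> zzm_verts m"
  shows "zzm_add m v u = zzm_add m w u \<longleftrightarrow> v = w"
proof
  assume sums_eq: "zzm_add m v u = zzm_add m w u"
  then have "[snd v + snd u = snd w + snd u] (mod m)"
    by (simp add: zzm_add_def cong_def)
  then have "[snd v = snd w] (mod m)"
    by (simp only: cong_add_rcancel)
  with sums_eq show "v = w"
    using assms by (auto simp: prod_eq_iff zzm_add_def zzm_verts_def cong_def)
qed simp

definition horizontal_step :: "int \<Rightarrow> (int \<Rightarrow> int \<times> int) \<Rightarrow> int \<Rightarrow> bool" where
  "horizontal_step m p i \<longleftrightarrow> p (i + 1) = zzm_add m (p i) (1, 0)"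

lemma horizontal_step_shift: "horizontal_step m (\<lambda>i. p (i + k)) i \<longleftrightarrow> horizontal_step m p (i + k)"
  by (simp add: horizontal_step_def add.assoc add.commute[of 1 k])

locale cay_walk =
  fixes m :: int and p :: "int \<Rightarrow> int \<times> int"
  assumes modulus_pos: "0 < m"
    and walk_in_verts: "p i \<in> zzm_verts m"
    and walk_arc: "cay_arc m (p i) (p (i + 1))"
begin

lemma walk_step: "p (i + 1) = zzm_add m (p i) (if horizontal_step m p i then (1, 0) else (0, 1))"
  using walk_arc[of i] by (auto simp: horizontal_step_def cay_arc_def)

lemma snd_walk_mod: "snd (p i) mod m = snd (p i)"
  using walk_in_verts[of i] by (auto simp: zzm_verts_def)

lemma fst_walk_step: "fst (p (i + 1)) = fst (p i) + of_bool (horizontal_step m p i)"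
  by (simp add: walk_step[of i] zzm_add_def)

lemma fst_walk_add:
  assumes "0 \<le> n"
  shows "fst (p (i + n)) = fst (p i) + int (card {l \<in> {0..<n}. horizontal_step m p (i + l)})"
  using assms
proof (induction n rule: int_ge_induct)
  case base
  show ?case by simp
next
  case (step n)
  let ?H = "\<lambda>k. {l \<in> {0..<k}. horizontal_step m p (i + l)}"
  have "?H (n + 1) = (if horizontal_step m p (i + n) then insert n (?H n) else ?H n)"
    using step.hyps by (auto simp: order_le_less)
  moreover have "n \<notin> ?H n" and "finite (?H n)"
    by (auto intro: finite_subset[of _ "{0..<n}"])
  ultimately show ?case
    using step.IH fst_walk_step[of "i + n"] by (simp add: add.assoc)
qed

lemma walk_predecessor:
  assumes "p (i + 1) = (a, b mod m)"
  shows "p i = (a - 1, b mod m) \<or> p i = (a, (b - 1) mod m)"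
proof (cases "horizontal_step m p i")
  case True
  then show ?thesis
    using assms walk_step[of i] zzm_add_e1[OF walk_in_verts] by (simp add: prod_eq_iff)
next
  case False
  then have "fst (p i) = a" and "[snd (p i) + 1 = (b - 1) + 1] (mod m)"
    using assms walk_step[of i] by (simp_all add: zzm_add_e2 cong_def)
  moreover from this(2) have "[snd (p i) = b - 1] (mod m)"
    by (simp only: cong_add_rcancel)
  ultimately show ?thesis
    using snd_walk_mod[of i] by (simp add: prod_eq_iff cong_def)
qed

lemma diagonal_walk: "[fst (p i) + snd (p i) = fst (p 0) + snd (p 0) + i] (mod m)"
proof (induction i rule: int_induct_iff)
  case 1
  show ?case by simp
next
  case (2 i)
  have "[fst (p (i + 1)) + snd (p (i + 1)) = fst (p i) + snd (p i) + 1] (mod m)"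
  proof (cases "horizontal_step m p i")
    case True
    then show ?thesis
      using walk_step[of i] zzm_add_e1[OF walk_in_verts] by (simp add: algebra_simps)
  next
    case False
    then show ?thesis
      using walk_step[of i] by (simp add: zzm_add_e2 cong_def mod_add_right_eq add.assoc)
  qed
  then show ?case
    using cong_add_rcancel[of "fst (p i) + snd (p i)" 1 "fst (p 0) + snd (p 0) + i" m]
    by (simp add: cong_def add.assoc)
qed

end

lemma cay_walk_shift:
  assumes "cay_walk m p"
  shows "cay_walk m (\<lambda>i. p (i + k))"
proof -
  interpret cay_walk m p by fact
  have reassoc: "i + 1 + k = (i + k) + 1" for i
    by simp
  show ?thesis
    by unfold_locales (simp_all only: modulus_pos walk_in_verts walk_arc reassoc)
qed

lemma cay_walks_same_steps_translate:
  assumes p: "cay_walk m p" and q: "cay_walk m q"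
    and same_steps: "\<And>i. horizontal_step m q i \<longleftrightarrow> horizontal_step m p i"
  shows "\<exists>g \<in> zzm_verts m. \<forall>i. q i = zzm_add m (p i) g"
proof -
  define g where "g = (fst (q 0) - fst (p 0), (snd (q 0) - snd (p 0)) mod m)"
  have "q i = zzm_add m (p i) g" for i
  proof (induction i rule: int_induct_iff)
    case 1
    show ?case
      using cay_walk.snd_walk_mod[OF q, of 0] by (simp add: g_def zzm_add_def mod_simps prod_eq_iff)
  next
    case (2 i)
    let ?s = "if horizontal_step m p i then (1, 0) else (0, 1) :: int \<times> int"
    have "q (i + 1) = zzm_add m (p (i + 1)) g \<longleftrightarrow>
        zzm_add m (q i) ?s = zzm_add m (zzm_add m (p i) g) ?s"
      using cay_walk.walk_step[OF p] cay_walk.walk_step[OF q] same_steps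
      by (simp add: zzm_add_right_commute)
    also have "\<dots> \<longleftrightarrow> q i = zzm_add m (p i) g"
      using zzm_add_right_cancel cay_walk.walk_in_verts[OF q] zzm_add_in_verts
        cay_walk.modulus_pos[OF p]
      by blast
    finally show ?case
      by (rule sym)
  qed
  moreover have "g \<in> zzm_verts m"
    using cay_walk.modulus_pos[OF p] by (simp add: g_def zzm_verts_def)
  ultimately show ?thesis
    by blast
qed

definition leaves_horizontally :: "int \<Rightarrow> (int \<Rightarrow> int \<times> int) \<Rightarrow> int \<times> int \<Rightarrow> bool" where
  "leaves_horizontally m p v \<longleftrightarrow> (\<exists>i. p i = v \<and> horizontal_step m p i)"

locale cay_ham_path = cay_walk +
  assumes path_bij: "bij_betw p UNIV (zzm_verts m)"
begin

lemma path_eq_iff: "p i = p j \<longleftrightarrow> i = j"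
  using bij_betw_imp_inj_on[OF path_bij] by (auto simp: inj_eq)

lemma path_visits: "\<exists>i. p i = (a, b mod m)"
proof -
  have "(a, b mod m) \<in> zzm_verts m"
    using modulus_pos by (simp add: zzm_verts_def)
  then show ?thesis
    using bij_betw_imp_surj_on[OF path_bij] by (metis imageE)
qed

lemma horizontal_step_iff_leaves: "horizontal_step m p i \<longleftrightarrow> leaves_horizontally m p (p i)"
  by (auto simp: leaves_horizontally_def path_eq_iff)

lemma leaves_horizontally_exchange:
  "leaves_horizontally m p (a, b mod m) \<longleftrightarrow> leaves_horizontally m p (a + 1, (b - 1) mod m)"
proof
  assume "leaves_horizontally m p (a, b mod m)"
  then obtain i where i: "p i = (a, b mod m)" and "p (i + 1) = (a + 1, b mod m)"
    unfolding leaves_horizontally_def horizontal_step_def by (auto simp: zzm_add_def)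
  obtain j where j: "p j = (a + 1, (b - 1) mod m)"
    using path_visits by blast
  have "horizontal_step m p j"
  proof (rule ccontr)
    assume "\<not> horizontal_step m p j"
    then have "p (j + 1) = (a + 1, b mod m)"
      using walk_step[of j] j by (simp add: zzm_add_e2 mod_simps)
    with \<open>p (i + 1) = (a + 1, b mod m)\<close> have "j = i"
      using path_eq_iff by (metis add_right_cancel)
    with i j show False
      by simp
  qed
  with j show "leaves_horizontally m p (a + 1, (b - 1) mod m)"
    unfolding leaves_horizontally_def by blast
next
  assume "leaves_horizontally m p (a + 1, (b - 1) mod m)"
  then obtain j where j: "p j = (a + 1, (b - 1) mod m)" and "p (j + 1) = (a + 2, (b - 1) mod m)"
    unfolding leaves_horizontally_def horizontal_step_def by (auto simp: zzm_add_def)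
  obtain l where l: "p (l + 1) = (a + 1, b mod m)"
    using path_visits by (metis diff_add_cancel)
  have "p l \<noteq> p j"
    using l \<open>p (j + 1) = (a + 2, (b - 1) mod m)\<close> path_eq_iff by fastforce
  with j have "p l = (a, b mod m)"
    using walk_predecessor[OF l] by auto
  moreover from this l have "horizontal_step m p l"
    by (simp add: horizontal_step_def zzm_add_def)
  ultimately show "leaves_horizontally m p (a, b mod m)"
    unfolding leaves_horizontally_def by blast
qed

lemma leaves_horizontally_along_diagonal:
  "leaves_horizontally m p (a, b mod m) \<longleftrightarrow> leaves_horizontally m p (a + n, (b - n) mod m)"
proof (induction n rule: int_induct_iff)
  case (2 n)
  show ?case
    using leaves_horizontally_exchange[of "a + n" "b - n"] by (simp add: algebra_simps)
qed simp

lemma leaves_horizontally_diagonal_invariant: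
  assumes "v \<in> zzm_verts m" and "w \<in> zzm_verts m"
    and "[fst v + snd v = fst w + snd w] (mod m)"
  shows "leaves_horizontally m p v \<longleftrightarrow> leaves_horizontally m p w"
proof -
  obtain a b c d where v: "v = (a, b)" and w: "w = (c, d)"
    by fastforce
  have "[d + c = (b - (c - a)) + c] (mod m)"
    using assms(3) by (simp add: v w cong_sym_eq add.commute)
  then have "[d = b - (c - a)] (mod m)"
    by (simp only: cong_add_rcancel)
  then have "w = (a + (c - a), (b - (c - a)) mod m)" and "v = (a, b mod m)"
    using assms(1,2) by (simp_all add: v w cong_def zzm_verts_def)
  then show ?thesis
    using leaves_horizontally_along_diagonal[of a b "c - a"] by simp
qed

lemma horizontal_step_cong:
  assumes "[i = j] (mod m)"
  shows "horizontal_step m p i \<longleftrightarrow> horizontal_step m p j"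
proof -
  have "[fst (p i) + snd (p i) = fst (p 0) + snd (p 0) + i] (mod m)"
    by (fact diagonal_walk)
  also have "[fst (p 0) + snd (p 0) + i = fst (p 0) + snd (p 0) + j] (mod m)"
    using assms by (simp only: cong_add_lcancel)
  also have "[fst (p 0) + snd (p 0) + j = fst (p j) + snd (p j)] (mod m)"
    by (rule cong_sym) (fact diagonal_walk)
  finally show ?thesis
    using leaves_horizontally_diagonal_invariant[OF walk_in_verts walk_in_verts]
    by (simp add: horizontal_step_iff_leaves)
qed

lemma fst_path_add_period: "fst (p (i + m)) = fst (p i) + (fst (p m) - fst (p 0))"
proof (induction i rule: int_induct_iff)
  case (2 i)
  show ?case
    using fst_walk_step[of i] fst_walk_step[of "i + m"] horizontal_step_cong[of "i + m" i]
    by (simp add: cong_def algebra_simps)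
qed simp

lemma fst_path_mult_period: "fst (p (m * j)) = fst (p 0) + j * (fst (p m) - fst (p 0))"
proof (induction j rule: int_induct_iff)
  case (2 j)
  show ?case
    using fst_path_add_period[of "m * j"] by (simp add: distrib_left distrib_right) arith
qed simp

lemma one_horizontal_step_per_period: "card {l \<in> {0..<m}. horizontal_step m p l} = 1"
proof -
  define d where "d = fst (p m) - fst (p 0)"
  have d_card: "d = int (card {l \<in> {0..<m}. horizontal_step m p l})"
    using fst_walk_add[of m 0] modulus_pos by (simp add: d_def)
  obtain a b where p0: "p 0 = (a, b)"
    by fastforce
  obtain i where i: "p i = (a + 1, (b - 1) mod m)"
    using path_visits by blast
  have "[a + b + i = a + 1 + (b - 1) mod m] (mod m)"
    using diagonal_walk[of i] i p0 by (simp add: cong_sym_eq)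
  also have "[a + 1 + (b - 1) mod m = a + b + 0] (mod m)"
    by (simp add: cong_def mod_simps)
  finally have "[i = 0] (mod m)"
    by (simp only: cong_add_lcancel)
  then obtain j where "i = m * j"
    unfolding cong_0_iff by (rule dvdE)
  then have "a + 1 = a + j * d"
    using fst_path_mult_period[of j] i p0 by (simp add: d_def)
  then have "j * d = 1"
    by simp
  then have "d = 1"
    using d_card zmult_eq_1_iff by fastforce
  then show ?thesis
    using d_card by simp
qed

lemma horizontal_step_iff_cong: "\<exists>r. \<forall>i. horizontal_step m p i \<longleftrightarrow> [i = r] (mod m)"
proof -
  obtain r where r: "{l \<in> {0..<m}. horizontal_step m p l} = {r}"
    using one_horizontal_step_per_period by (rule card_1_singletonE)
  then have "r \<in> {0..<m}"
    by blast
  then have "r mod m = r"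
    by simp
  have "horizontal_step m p i \<longleftrightarrow> [i = r] (mod m)" for i
  proof -
    have "horizontal_step m p i \<longleftrightarrow> horizontal_step m p (i mod m)"
      by (rule horizontal_step_cong) (simp add: cong_def)
    also have "\<dots> \<longleftrightarrow> i mod m \<in> {l \<in> {0..<m}. horizontal_step m p l}"
      using modulus_pos by simp
    also have "\<dots> \<longleftrightarrow> [i = r] (mod m)"
      using r \<open>r mod m = r\<close> by (simp add: cong_def)
    finally show ?thesis .
  qed
  then show ?thesis
    by blast
qed

end

lemma two_way_ham_path_imp_cay_ham_path:
  assumes "0 < m" and "two_way_ham_path m p"
  shows "cay_ham_path m p"
proof -
  have bij: "bij_betw p UNIV (zzm_verts m)" and arcs: "\<And>i. cay_arc m (p i) (p (i + 1))"
    using assms(2) by (simp_all add: two_way_ham_path_def)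
  have "cay_walk m p"
    by (rule cay_walk.intro) (use assms(1) bij_betw_apply[OF bij] arcs in simp_all)
  then show ?thesis
    using bij by (simp add: cay_ham_path_def cay_ham_path_axioms_def)
qed

definition staircase :: "int \<Rightarrow> int \<Rightarrow> int \<times> int" where
  "staircase m i = (i div m, (i mod m - i div m) mod m)"

lemma staircase_bij:
  assumes "0 < m"
  shows "bij_betw (staircase m) UNIV (zzm_verts m)"
proof (rule bij_betw_byWitness[where f' = "\<lambda>(a, b). a * m + (a + b) mod m"])
  show "\<forall>i\<in>UNIV. (\<lambda>(a, b). a * m + (a + b) mod m) (staircase m i) = i"
    by (simp add: staircase_def mod_simps)
  show "\<forall>v\<in>zzm_verts m. staircase m ((\<lambda>(a, b). a * m + (a + b) mod m) v) = v"
  proof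
    fix v
    assume "v \<in> zzm_verts m"
    then obtain a b where v: "v = (a, b)" and b: "0 \<le> b" "b < m"
      by (auto simp: zzm_verts_def)
    have "(a * m + (a + b) mod m) div m = a" and "(a * m + (a + b) mod m) mod m = (a + b) mod m"
      using assms by simp_all
    moreover have "((a + b) mod m - a) mod m = b"
      using b by (simp add: mod_simps)
    ultimately show "staircase m ((\<lambda>(a, b). a * m + (a + b) mod m) v) = v"
      by (simp add: staircase_def v)
  qed
  show "staircase m ` UNIV \<subseteq> zzm_verts m"
    using assms by (auto simp: staircase_def zzm_verts_def)
qed simp

lemma staircase_step:
  assumes "0 < m"
  shows "staircase m (i + 1) = zzm_add m (staircase m i) (if (i + 1) mod m = 0 then (1, 0) else (0, 1))"
proof -
  define a t where "a = i div m" and "t = i mod m"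
  then have i: "i = a * m + t" and t: "0 \<le> t" "t < m"
    using assms by simp_all
  have staircase_i: "staircase m i = (a, (t - a) mod m)"
    by (simp add: staircase_def a_def t_def)
  show ?thesis
  proof (cases "t + 1 < m")
    case True
    then have "(i + 1) div m = a" and "(i + 1) mod m = t + 1"
      unfolding i using t by (simp_all add: add.assoc)
    then have "staircase m (i + 1) = (a, (t + 1 - a) mod m)"
      by (simp add: staircase_def)
    moreover have "(t + 1 - a) mod m = ((t - a) mod m + 1) mod m"
      by (simp add: mod_simps diff_add_eq)
    ultimately show ?thesis
      using t \<open>(i + 1) mod m = t + 1\<close> by (simp add: staircase_i zzm_add_def)
  next
    case False
    then have i1: "i + 1 = (a + 1) * m"
      unfolding i using t by (simp add: algebra_simps)
    then have "staircase m (i + 1) = (a + 1, (- (a + 1)) mod m)"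
      using assms by (simp add: staircase_def)
    moreover have "t - a = - (a + 1) + m"
      using False t by simp
    then have "(t - a) mod m = (- (a + 1)) mod m"
      by (simp only: mod_add_self2)
    ultimately show ?thesis
      using assms i1 by (simp add: staircase_i zzm_add_def)
  qed
qed

lemma two_way_ham_path_staircase: "0 < m \<Longrightarrow> two_way_ham_path m (staircase m)"
  using staircase_bij staircase_step by (simp add: two_way_ham_path_def cay_arc_def)

lemma cay_ham_paths_translate:
  assumes "cay_ham_path m p" and "cay_ham_path m q"
  shows "\<exists>g \<in> zzm_verts m. \<exists>k. \<forall>i. q i = zzm_add m (p (i + k)) g"
proof -
  interpret P: cay_ham_path m p by fact
  interpret Q: cay_ham_path m q by fact
  obtain r\<^sub>p where r\<^sub>p: "\<And>i. horizontal_step m p i \<longleftrightarrow> [i = r\<^sub>p] (mod m)"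
    using P.horizontal_step_iff_cong by blast
  obtain r\<^sub>q where r\<^sub>q: "\<And>i. horizontal_step m q i \<longleftrightarrow> [i = r\<^sub>q] (mod m)"
    using Q.horizontal_step_iff_cong by blast
  define k where "k = r\<^sub>p - r\<^sub>q"
  have "horizontal_step m q i \<longleftrightarrow> horizontal_step m (\<lambda>i. p (i + k)) i" for i
    using r\<^sub>p[of "i + k"] r\<^sub>q[of i] cong_add_rcancel[of i k r\<^sub>q m]
    by (simp add: horizontal_step_shift k_def)
  then show ?thesis
    using cay_walks_same_steps_translate[OF cay_walk_shift[OF P.cay_walk_axioms] Q.cay_walk_axioms]
    by blast
qed

theorem mainTheorem15:
  fixes m :: int
  assumes "m \<ge> 2"
  shows "(\<exists>p. two_way_ham_path m p) \<and>
         (\<forall>p q. two_way_ham_path m p \<and> two_way_ham_path m q \<longrightarrow>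
            (\<exists>g \<in> zzm_verts m. \<exists>k::int. \<forall>i. q i = zzm_add m (p (i + k)) g))"
proof (intro conjI allI impI)
  have m_pos: "0 < m"
    using assms by simp
  then show "\<exists>p. two_way_ham_path m p"
    using two_way_ham_path_staircase by blast
  fix p q
  assume "two_way_ham_path m p \<and> two_way_ham_path m q"
  with m_pos show "\<exists>g \<in> zzm_verts m. \<exists>k::int. \<forall>i. q i = zzm_add m (p (i + k)) g"
    by (intro cay_ham_paths_translate two_way_ham_path_imp_cay_ham_path) simp_all
qed

end
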